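(* Let the language $\mathcal{L}(\Rightarrow)$, Yalcin's semantics, validity, informational consequence and the Yalcin logic be as described in the context. Then the set of formulas of $\mathcal{L}(\Rightarrow)$ that are valid according to Yalcin's semantics is exactly the Yalcin logic. Moreover, for all formulas $\sigma_1,\dots,\sigma_n,\varphi$ of $\mathcal{L}(\Rightarrow)$, $\varphi$ is an informational consequence of $\{\sigma_1,\dots,\sigma_n\}$ if and only if $(\Box\sigma_1\wedge\dots\wedge\Box\sigma_n)\to\Box\varphi$ is a theorem of the Yalcin logic.
   Context: The language $\mathcal{L}(\Rightarrow)$ is given by $\varphi::= p\mid \neg\varphi\mid (\varphi\wedge\varphi)\mid \Box\varphi \mid (\varphi\Rightarrow\varphi)$, where $p$ ranges over a fixed set of propositional variables; $\vee,\to,\leftrightarrow,\bot$ are defined as usual and $\Diamond\varphi:=\neg\Box\neg\varphi$. $\mathcal{L}$ is the set of formulas not containing $\Rightarrow$; a formula is nonmodal if it is in $\mathcal{L}$ and contains no $\Box$. A model is $\mathcal{M}=\langle W,V\rangle$ with $W$ a nonempty set and $V$ assigning to each propositional variable a subset of $W$. Yalcin's semantics evaluates formulas at $\mathcal{M},w,X$ with $w\in W$ and $X\subseteq W$ (an information state): $\mathcal{M},w,X\vDash p$ iff $w\in V(p)$; negation and conjunction are Boolean; $\mathcal{M},w,X\vDash\Box\varphi$ iff $\mathcal{M},v,X\vDash\varphi$ for all $v\in X$; $\mathcal{M},w,X\vDash\varphi\Rightarrow\psi$ iff $\mathcal{M},w,\llbracket\varphi\rrbracket^{\mathcal{M},X}\vDash\Box\psi$,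 where $\llbracket\varphi\rrbracket^{\mathcal{M},X}=\{v\in X\mid \mathcal{M},v,X\vDash\varphi\}$. A formula is valid iff it is true at every $w$ relative to every $X\subseteq W$ in every model. $\mathcal{M},X\vDash\varphi$ means $\mathcal{M},w,X\vDash\varphi$ for all $w\in X$; $\varphi$ is an informational consequence of a set $\Sigma$ iff for every model $\mathcal{M}$ and every $X\subseteq W$, if $\mathcal{M},X\vDash\sigma$ for all $\sigma\in\Sigma$ then $\mathcal{M},X\vDash\varphi$. The Yalcin logic is the smallest set of $\mathcal{L}(\Rightarrow)$ formulas closed under replacement of equivalents (if $\alpha\leftrightarrow\beta$ is in the set and $\varphi'$ results from $\varphi$ by replacing an occurrence of $\alpha$ by $\beta$, then $\varphi\leftrightarrow\varphi'$ is in the set), modus ponens for $\to$, and necessitation for $\Box$ (from $\varphi$ infer $\Box\varphi$), and containing all substitution instances of propositional tautologies and all instances of: K: $\Box(\varphi\to\psi)\to(\Box\varphi\to\Box\psi)$; 4: $\Diamond\Diamond\varphi\to\Diamond\varphi$; 5: $\Diamond\Box\varphi\to\Box\varphi$; I1: $(\varphi\Rightarrow\pi)\leftrightarrow\Box(\varphi\to\pi)$ for $\pi$ nonmodal; I2: $(\varphi\Rightarrow(\alpha\wedge\beta))\leftrightarrow((\varphi\Rightarrow\alpha)\wedge(\varphi\Rightarrow\beta))$; I3: $(\varphi\Rightarrow\alpha)\to(\varphi\Rightarrow(\alpha\vee\beta))$; I4: $(\varphi\Rightarrow\alpha)\to(\varphi\Rightarrow\Box\alpha)$; I5: $((\varphi\Rightarrow(\alpha\vee\Box\beta))\wedge\neg(\varphi\Rightarrow\beta))\to(\varphi\Rightarrow\alpha)$;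 I6: $((\varphi\Rightarrow(\alpha\vee\Diamond\beta))\wedge(\varphi\Rightarrow\neg\beta))\to(\varphi\Rightarrow\alpha)$; I7: $\neg(\varphi\Rightarrow\beta)\to(\varphi\Rightarrow\Diamond\neg\beta)$. *)

theory Defs
  imports Main
begin

datatype 'p fm =
    Var 'p
  | Neg "'p fm"
  | Conj "'p fm" "'p fm"
  | Box "'p fm"
  | Cond "'p fm" "'p fm"

definition Disj :: "'p fm \<Rightarrow> 'p fm \<Rightarrow> 'p fm" where
  "Disj a b = Neg (Conj (Neg a) (Neg b))"
definition Imp :: "'p fm \<Rightarrow> 'p fm \<Rightarrow> 'p fm" where
  "Imp a b = Neg (Conj a (Neg b))"
definition Iff :: "'p fm \<Rightarrow> 'p fm \<Rightarrow> 'p fm" where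
  "Iff a b = Conj (Imp a b) (Imp b a)"
definition Bot :: "'p fm" where
  "Bot = Conj (Var undefined) (Neg (Var undefined))"
definition Top :: "'p fm" where
  "Top = Neg Bot"
definition Dia :: "'p fm \<Rightarrow> 'p fm" where
  "Dia a = Neg (Box (Neg a))"

fun nonmodal :: "'p fm \<Rightarrow> bool" where
  "nonmodal (Var p) = True"
| "nonmodal (Neg a) = nonmodal a"
| "nonmodal (Conj a b) = (nonmodal a \<and> nonmodal b)"
| "nonmodal (Box a) = False"
| "nonmodal (Cond a b) = False"

text \<open>Truth at world w relative to information state X, valuation V.
  The Cond clause is the literal unfolding of
  w, [[phi]]^X |= Box psi with [[phi]]^X = {v : X. v, X |= phi}.\<close>
fun sat :: "('p \<Rightarrow> 'w set) \<Rightarrow> 'w \<Rightarrow> 'w set \<Rightarrow> 'p fm \<Rightarrow> bool" where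
  "sat V w X (Var p) = (w \<in> V p)"
| "sat V w X (Neg a) = (\<not> sat V w X a)"
| "sat V w X (Conj a b) = (sat V w X a \<and> sat V w X b)"
| "sat V w X (Box a) = (\<forall>v\<in>X. sat V v X a)"
| "sat V w X (Cond a b) =
     (\<forall>v\<in>{u\<in>X. sat V u X a}. sat V v {u\<in>X. sat V u X a} b)"

definition is_model :: "'w set \<Rightarrow> ('p \<Rightarrow> 'w set) \<Rightarrow> bool" where
  "is_model W V \<longleftrightarrow> W \<noteq> {} \<and> (\<forall>p. V p \<subseteq> W)"

definition valid_in :: "'w itself \<Rightarrow> 'p fm \<Rightarrow> bool" where
  "valid_in TYPE('w) \<phi> \<longleftrightarrow>
     (\<forall>(W::'w set) V w X. is_model W V \<and> w \<in> W \<and> X \<subseteq> W \<longrightarrow> sat V w X \<phi>)"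

definition info_cons_in :: "'w itself \<Rightarrow> 'p fm set \<Rightarrow> 'p fm \<Rightarrow> bool" where
  "info_cons_in TYPE('w) \<Sigma> \<phi> \<longleftrightarrow>
     (\<forall>(W::'w set) V X. is_model W V \<and> X \<subseteq> W \<longrightarrow>
        (\<forall>\<sigma>\<in>\<Sigma>. \<forall>w\<in>X. sat V w X \<sigma>) \<longrightarrow> (\<forall>w\<in>X. sat V w X \<phi>))"

datatype pform = PVar nat | PNeg pform | PConj pform pform

fun peval :: "(nat \<Rightarrow> bool) \<Rightarrow> pform \<Rightarrow> bool" where
  "peval a (PVar n) = a n"
| "peval a (PNeg f) = (\<not> peval a f)"
| "peval a (PConj f g) = (peval a f \<and> peval a g)"

definition ptaut :: "pform \<Rightarrow> bool" where
  "ptaut f \<longleftrightarrow> (\<forall>a. peval a f)"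

fun psubst :: "(nat \<Rightarrow> 'p fm) \<Rightarrow> pform \<Rightarrow> 'p fm" where
  "psubst s (PVar n) = s n"
| "psubst s (PNeg f) = Neg (psubst s f)"
| "psubst s (PConj f g) = Conj (psubst s f) (psubst s g)"

definition taut_instance :: "'p fm \<Rightarrow> bool" where
  "taut_instance \<phi> \<longleftrightarrow> (\<exists>f s. ptaut f \<and> \<phi> = psubst s f)"

inductive repl :: "'p fm \<Rightarrow> 'p fm \<Rightarrow> 'p fm \<Rightarrow> 'p fm \<Rightarrow> bool" for a b where
  here: "repl a b a b"
| neg: "repl a b f f' \<Longrightarrow> repl a b (Neg f) (Neg f')"
| conjL: "repl a b f f' \<Longrightarrow> repl a b (Conj f g) (Conj f' g)"
| conjR: "repl a b g g' \<Longrightarrow> repl a b (Conj f g) (Conj f g')"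
| box: "repl a b f f' \<Longrightarrow> repl a b (Box f) (Box f')"
| condL: "repl a b f f' \<Longrightarrow> repl a b (Cond f g) (Cond f' g)"
| condR: "repl a b g g' \<Longrightarrow> repl a b (Cond f g) (Cond f g')"

inductive_set yalcin :: "'p fm set" where
  RE: "Iff a b \<in> yalcin \<Longrightarrow> repl a b f f' \<Longrightarrow> Iff f f' \<in> yalcin"
| MP: "f \<in> yalcin \<Longrightarrow> Imp f g \<in> yalcin \<Longrightarrow> g \<in> yalcin"
| Nec: "f \<in> yalcin \<Longrightarrow> Box f \<in> yalcin"
| Taut: "taut_instance f \<Longrightarrow> f \<in> yalcin"
| K: "Imp (Box (Imp f g)) (Imp (Box f) (Box g)) \<in> yalcin"
| Ax4: "Imp (Dia (Dia f)) (Dia f) \<in> yalcin"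
| Ax5: "Imp (Dia (Box f)) (Box f) \<in> yalcin"
| I1: "nonmodal \<pi> \<Longrightarrow> Iff (Cond f \<pi>) (Box (Imp f \<pi>)) \<in> yalcin"
| I2: "Iff (Cond f (Conj a b)) (Conj (Cond f a) (Cond f b)) \<in> yalcin"
| I3: "Imp (Cond f a) (Cond f (Disj a b)) \<in> yalcin"
| I4: "Imp (Cond f a) (Cond f (Box a)) \<in> yalcin"
| I5: "Imp (Conj (Cond f (Disj a (Box b))) (Neg (Cond f b))) (Cond f a) \<in> yalcin"
| I6: "Imp (Conj (Cond f (Disj a (Dia b))) (Cond f (Neg b))) (Cond f a) \<in> yalcin"
| I7: "Imp (Neg (Cond f b)) (Cond f (Dia (Neg b))) \<in> yalcin"

fun box_conj :: "'p fm list \<Rightarrow> 'p fm" where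
  "box_conj [] = Top"
| "box_conj [s] = Box s"
| "box_conj (s # ss) = Conj (Box s) (box_conj ss)"

end

theory Submission
  imports Defs
begin

text \<open>
  For completeness, I1--I7 and replacement
  of equivalents eliminate conditionals: \<open>\<phi> \<Rightarrow> \<psi>\<close> with conditional-free
  arguments is provably equivalent to a conditional-free formula, obtained by
  bringing \<open>\<psi>\<close> into disjunctive form, splitting conjunctions with I2, pulling
  boxed and negated boxed disjuncts out with I3--I7, and turning the remaining
  nonmodal consequent \<open>\<pi>\<close> into \<open>\<box>(\<phi> \<rightarrow> \<pi>)\<close> with I1.  On conditional-free
  formulas the information state is a set of worlds seen from every world, so the
  logic is K45, and a non-theorem is refuted in a finite canonical model: its
  worlds are the atoms over the subformulas, and the information state is the
  cluster of atoms that agree with a refuting atom on boxed formulas and contain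
  everything it necessitates.
\<close>

subsection \<open>Propositional reasoning in the Yalcin logic\<close>

fun prop_val :: "('p fm \<Rightarrow> bool) \<Rightarrow> 'p fm \<Rightarrow> bool" where
  "prop_val g (Neg a) = (\<not> prop_val g a)"
| "prop_val g (Conj a b) = (prop_val g a \<and> prop_val g b)"
| "prop_val g a = g a"

lemma prop_val_defined_connectives [simp]:
  "prop_val g (Imp a b) = (prop_val g a \<longrightarrow> prop_val g b)"
  "prop_val g (Disj a b) = (prop_val g a \<or> prop_val g b)"
  "prop_val g (Iff a b) = (prop_val g a = prop_val g b)"
  "prop_val g Bot = False"
  "prop_val g Top = True"
  by (auto simp: Imp_def Disj_def Iff_def Bot_def Top_def)

fun prop_atoms :: "'p fm \<Rightarrow> 'p fm set" where
  "prop_atoms (Neg a) = prop_atoms a"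
| "prop_atoms (Conj a b) = prop_atoms a \<union> prop_atoms b"
| "prop_atoms a = {a}"

lemma finite_prop_atoms: "finite (prop_atoms \<phi>)"
  by (induction \<phi> rule: prop_atoms.induct) auto

fun prop_skeleton :: "('p fm \<Rightarrow> nat) \<Rightarrow> 'p fm \<Rightarrow> pform" where
  "prop_skeleton i (Neg a) = PNeg (prop_skeleton i a)"
| "prop_skeleton i (Conj a b) = PConj (prop_skeleton i a) (prop_skeleton i b)"
| "prop_skeleton i a = PVar (i a)"

lemma psubst_prop_skeleton:
  "(\<And>x. x \<in> prop_atoms \<phi> \<Longrightarrow> s (i x) = x) \<Longrightarrow> psubst s (prop_skeleton i \<phi>) = \<phi>"
  by (induction i \<phi> rule: prop_skeleton.induct) auto

lemma peval_prop_skeleton: "peval a (prop_skeleton i \<phi>) = prop_val (a \<circ> i) \<phi>"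
  by (induction i \<phi> rule: prop_skeleton.induct) auto

lemma yalcin_tautI:
  fixes \<phi> :: "'p fm"
  assumes "\<And>g. prop_val g \<phi>"
  shows "\<phi> \<in> yalcin"
proof -
  obtain i :: "'p fm \<Rightarrow> nat" where i: "inj_on i (prop_atoms \<phi>)"
    using finite_imp_inj_to_nat_seg[OF finite_prop_atoms] by blast
  have "psubst (inv_into (prop_atoms \<phi>) i) (prop_skeleton i \<phi>) = \<phi>"
    using i by (intro psubst_prop_skeleton) simp
  moreover have "ptaut (prop_skeleton i \<phi>)"
    using assms by (simp add: ptaut_def peval_prop_skeleton)
  ultimately have "taut_instance \<phi>"
    unfolding taut_instance_def by metis
  then show ?thesis by (rule yalcin.Taut)
qed

lemma yalcin_prop_consequence:
  assumes "set hs \<subseteq> yalcin" and "\<And>g. (\<forall>h\<in>set hs. prop_val g h) \<Longrightarrow> prop_val g c"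
  shows "c \<in> yalcin"
  using assms
proof (induction hs arbitrary: c)
  case Nil
  then show ?case by (intro yalcin_tautI) simp
next
  case (Cons h hs)
  then have "Imp h c \<in> yalcin" by (intro Cons.IH) auto
  with Cons.prems(1) show ?case by (auto intro: yalcin.MP)
qed

lemma yalcin_prop1:
  "a \<in> yalcin \<Longrightarrow> (\<And>g. prop_val g a \<Longrightarrow> prop_val g c) \<Longrightarrow> c \<in> yalcin"
  by (rule yalcin_prop_consequence[of "[a]"]) auto

lemma yalcin_prop2:
  "a \<in> yalcin \<Longrightarrow> b \<in> yalcin \<Longrightarrow> (\<And>g. prop_val g a \<Longrightarrow> prop_val g b \<Longrightarrow> prop_val g c)
    \<Longrightarrow> c \<in> yalcin"
  by (rule yalcin_prop_consequence[of "[a, b]"]) auto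

lemma yalcin_prop3:
  "a \<in> yalcin \<Longrightarrow> b \<in> yalcin \<Longrightarrow> d \<in> yalcin
    \<Longrightarrow> (\<And>g. prop_val g a \<Longrightarrow> prop_val g b \<Longrightarrow> prop_val g d \<Longrightarrow> prop_val g c) \<Longrightarrow> c \<in> yalcin"
  by (rule yalcin_prop_consequence[of "[a, b, d]"]) auto

lemma yalcin_Iff_trans: "Iff a b \<in> yalcin \<Longrightarrow> Iff b c \<in> yalcin \<Longrightarrow> Iff a c \<in> yalcin"
  by (erule yalcin_prop2) auto

lemma yalcin_Imp_trans: "Imp a b \<in> yalcin \<Longrightarrow> Imp b c \<in> yalcin \<Longrightarrow> Imp a c \<in> yalcin"
  by (erule yalcin_prop2) auto

lemma yalcin_Iff_cong:
  assumes "Iff a b \<in> yalcin"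
  shows "Iff (Neg a) (Neg b) \<in> yalcin"
    and "Iff (Conj a c) (Conj b c) \<in> yalcin" and "Iff (Conj c a) (Conj c b) \<in> yalcin"
    and "Iff (Box a) (Box b) \<in> yalcin"
    and "Iff (Cond a c) (Cond b c) \<in> yalcin" and "Iff (Cond c a) (Cond c b) \<in> yalcin"
  using assms by (auto intro: yalcin.RE intro!: repl.intros)

lemma yalcin_Cond_weaken_left: "Imp (Cond \<phi> b) (Cond \<phi> (Disj a b)) \<in> yalcin"
proof -
  have "Iff (Cond \<phi> (Disj b a)) (Cond \<phi> (Disj a b)) \<in> yalcin"
    by (intro yalcin_Iff_cong yalcin_tautI) auto
  with yalcin.I3 show ?thesis by (rule yalcin_prop2) auto
qed

lemma yalcin_Box_4: "Imp (Box c) (Box (Box c)) \<in> yalcin"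
proof -
  have "Iff (Neg (Neg c)) c \<in> yalcin" by (rule yalcin_tautI) simp
  then have inner: "Iff (Box (Neg (Neg c))) (Box c) \<in> yalcin" by (rule yalcin_Iff_cong)
  then have "Iff (Neg (Neg (Box (Neg (Neg c))))) (Box c) \<in> yalcin" by (rule yalcin_prop1) simp
  then have outer: "Iff (Box (Neg (Neg (Box (Neg (Neg c)))))) (Box (Box c)) \<in> yalcin"
    by (rule yalcin_Iff_cong)
  from yalcin.Ax4[of "Neg c"] inner outer show ?thesis by (rule yalcin_prop3) (auto simp: Dia_def)
qed

lemma yalcin_Box_5: "Imp (Neg (Box c)) (Box (Neg (Box c))) \<in> yalcin"
  using yalcin.Ax5[of c] by (rule yalcin_prop1) (auto simp: Dia_def)

subsection \<open>Soundness\<close>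

lemma sat_defined_connectives [simp]:
  "sat V w X (Imp a b) = (sat V w X a \<longrightarrow> sat V w X b)"
  "sat V w X (Disj a b) = (sat V w X a \<or> sat V w X b)"
  "sat V w X (Iff a b) = (sat V w X a = sat V w X b)"
  "sat V w X (Dia a) = (\<exists>v\<in>X. sat V v X a)"
  "sat V w X Bot = False"
  "sat V w X Top = True"
  by (auto simp: Imp_def Disj_def Iff_def Bot_def Top_def Dia_def)

lemma sat_nonmodal: "nonmodal \<pi> \<Longrightarrow> sat V w X \<pi> = sat V w Y \<pi>"
  by (induction \<pi>) auto

lemma sat_psubst: "sat V w X (psubst s f) = peval (\<lambda>n. sat V w X (s n)) f"
  by (induction f) auto

lemma sat_repl:
  assumes "repl a b f f'" and "\<And>w X. w \<in> W \<Longrightarrow> X \<subseteq> W \<Longrightarrow> sat V w X a = sat V w X b"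
    and "w \<in> W" and "X \<subseteq> W"
  shows "sat V w X f = sat V w X f'"
  using assms(1,3,4)
proof (induction arbitrary: w X rule: repl.induct)
  case here
  then show ?case by (rule assms(2))
next
  case (box f f')
  then show ?case by auto
next
  case (condL f f' g)
  then have "{u\<in>X. sat V u X f} = {u\<in>X. sat V u X f'}" by auto
  then show ?case by simp
next
  case (condR g g' f)
  let ?Y = "{u\<in>X. sat V u X f}"
  have "sat V v ?Y g = sat V v ?Y g'" if "v \<in> ?Y" for v
    using condR that by (intro condR.IH) auto
  then show ?case by simp
qed simp_all

lemma yalcin_sound:
  "\<phi> \<in> yalcin \<Longrightarrow> is_model W V \<Longrightarrow> w \<in> W \<Longrightarrow> X \<subseteq> W \<Longrightarrow> sat V w X \<phi>"
proof (induction arbitrary: W V w X rule: yalcin.induct)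
  case (RE a b f f')
  have "sat V w' X' a = sat V w' X' b" if "w' \<in> W" "X' \<subseteq> W" for w' X'
    using RE.IH[OF RE.prems(1) that] by simp
  then show ?case using sat_repl[OF RE.hyps(2) _ RE.prems(2,3)] by simp
next
  case (MP f g)
  then show ?case by simp
next
  case (Nec f)
  have "sat V v X f" if "v \<in> X" for v
  proof (rule Nec.IH[OF Nec.prems(1) _ Nec.prems(3)])
    show "v \<in> W" using that Nec.prems(3) by blast
  qed
  then show ?case by simp
next
  case (Taut f)
  then show ?case by (auto simp: taut_instance_def ptaut_def sat_psubst)
next
  case (I1 \<pi> f)
  have "sat V v {u\<in>X. sat V u X f} \<pi> = sat V v X \<pi>" for v
    using I1.hyps by (rule sat_nonmodal)
  then show ?case by auto
qed auto

lemma valid_in_if_yalcin: "\<phi> \<in> yalcin \<Longrightarrow> valid_in TYPE('w) \<phi>"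
  by (auto simp: valid_in_def intro: yalcin_sound)

lemma valid_in_yalcin_Iff:
  fixes \<phi> \<psi> :: "'p fm"
  assumes "Iff \<phi> \<psi> \<in> yalcin" and "valid_in TYPE('w) \<phi>"
  shows "valid_in TYPE('w) \<psi>"
  unfolding valid_in_def
proof (intro allI impI)
  fix W :: "'w set" and V :: "'p \<Rightarrow> 'w set" and w X
  assume model: "is_model W V \<and> w \<in> W \<and> X \<subseteq> W"
  then have "sat V w X \<phi>" using assms(2) unfolding valid_in_def by blast
  moreover have "sat V w X (Iff \<phi> \<psi>)" using model by (intro yalcin_sound[OF assms(1)]) auto
  ultimately show "sat V w X \<psi>" by simp
qed

lemma sat_box_conj: "sat V w X (box_conj ss) = (\<forall>\<sigma>\<in>set ss. \<forall>v\<in>X. sat V v X \<sigma>)"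
  by (induction ss rule: box_conj.induct) auto

lemma info_cons_in_iff_valid_in:
  "info_cons_in TYPE('w) (set ss) \<phi> = valid_in TYPE('w) (Imp (box_conj ss) (Box \<phi>))"
  unfolding info_cons_in_def valid_in_def is_model_def
  by (auto simp: sat_box_conj) blast

subsection \<open>Eliminating conditionals\<close>

fun cond_free :: "'p fm \<Rightarrow> bool" where
  "cond_free (Var p) = True"
| "cond_free (Neg a) = cond_free a"
| "cond_free (Conj a b) = (cond_free a \<and> cond_free b)"
| "cond_free (Box a) = cond_free a"
| "cond_free (Cond a b) = False"

lemma cond_free_defined_connectives [simp]:
  "cond_free (Imp a b) = (cond_free a \<and> cond_free b)"
  "cond_free (Disj a b) = (cond_free a \<and> cond_free b)"
  "cond_free (Iff a b) = (cond_free a \<and> cond_free b)"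
  "cond_free Bot" "cond_free Top"
  by (auto simp: Imp_def Disj_def Iff_def Bot_def Top_def)

lemma nonmodal_Bot [simp]: "nonmodal Bot"
  by (simp add: Bot_def)

lemma nonmodal_Disj [simp]: "nonmodal (Disj a b) = (nonmodal a \<and> nonmodal b)"
  by (simp add: Disj_def)

lemma cond_free_if_nonmodal: "nonmodal \<pi> \<Longrightarrow> cond_free \<pi>"
  by (induction \<pi>) auto

lemma yalcin_Cond_Disj_Box:
  "Iff (Cond \<phi> (Disj a (Box b))) (Disj (Cond \<phi> b) (Cond \<phi> a)) \<in> yalcin"
proof -
  have "Imp (Cond \<phi> b) (Cond \<phi> (Disj a (Box b))) \<in> yalcin"
    using yalcin.I4 yalcin_Cond_weaken_left by (rule yalcin_Imp_trans)
  with yalcin.I5[of \<phi> a b] yalcin.I3[of \<phi> a "Box b"] show ?thesis by (rule yalcin_prop3) auto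
qed

lemma yalcin_Cond_Disj_Neg_Box:
  "Iff (Cond \<phi> (Disj a (Neg (Box b)))) (Disj (Neg (Cond \<phi> b)) (Cond \<phi> a)) \<in> yalcin"
proof -
  have nn: "Iff (Neg (Neg b)) b \<in> yalcin" by (rule yalcin_tautI) simp
  have dia: "Iff (Cond \<phi> (Disj a (Dia (Neg b)))) (Cond \<phi> (Disj a (Neg (Box b)))) \<in> yalcin"
    unfolding Disj_def Dia_def by (rule yalcin.RE[OF nn], intro repl.intros)
  have I6': "Imp (Conj (Cond \<phi> (Disj a (Neg (Box b)))) (Cond \<phi> b)) (Cond \<phi> a) \<in> yalcin"
    using yalcin.I6[of \<phi> a "Neg b"] dia yalcin_Iff_cong(6)[OF nn, of \<phi>]
    by (rule yalcin_prop3) auto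
  have "Imp (Neg (Cond \<phi> b)) (Cond \<phi> (Disj a (Dia (Neg b)))) \<in> yalcin"
    using yalcin.I7 yalcin_Cond_weaken_left by (rule yalcin_Imp_trans)
  with dia have I7': "Imp (Neg (Cond \<phi> b)) (Cond \<phi> (Disj a (Neg (Box b)))) \<in> yalcin"
    by (rule yalcin_prop2) auto
  from I6' I7' yalcin.I3[of \<phi> a "Neg (Box b)"] show ?thesis by (rule yalcin_prop3) auto
qed

definition cond_eliminable :: "'p fm \<Rightarrow> 'p fm \<Rightarrow> bool" where
  "cond_eliminable \<phi> \<psi> \<longleftrightarrow> (\<exists>\<theta>. cond_free \<theta> \<and> Iff (Cond \<phi> \<psi>) \<theta> \<in> yalcin)"

lemma cond_eliminableI: "Iff (Cond \<phi> \<psi>) \<theta> \<in> yalcin \<Longrightarrow> cond_free \<theta> \<Longrightarrow> cond_eliminable \<phi> \<psi>"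
  unfolding cond_eliminable_def by blast

lemma cond_eliminable_cong:
  assumes "Iff \<psi> \<psi>' \<in> yalcin" and "cond_eliminable \<phi> \<psi>'"
  shows "cond_eliminable \<phi> \<psi>"
  using assms yalcin_Iff_cong(6)[OF assms(1)] yalcin_Iff_trans
  unfolding cond_eliminable_def by blast

lemma cond_eliminable_nonmodal:
  assumes "cond_free \<phi>" and "nonmodal \<pi>"
  shows "cond_eliminable \<phi> \<pi>"
  using assms by (intro cond_eliminableI[OF yalcin.I1]) (simp_all add: cond_free_if_nonmodal)

lemma cond_eliminable_Conj:
  assumes "cond_eliminable \<phi> a" and "cond_eliminable \<phi> b"
  shows "cond_eliminable \<phi> (Conj a b)"
proof -
  obtain \<theta>a \<theta>b where "cond_free \<theta>a" "Iff (Cond \<phi> a) \<theta>a \<in> yalcin"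
    and "cond_free \<theta>b" "Iff (Cond \<phi> b) \<theta>b \<in> yalcin"
    using assms unfolding cond_eliminable_def by blast
  moreover have eq: "Iff (Cond \<phi> (Conj a b)) (Conj \<theta>a \<theta>b) \<in> yalcin"
    using yalcin.I2 calculation(2,4) by (rule yalcin_prop3) auto
  ultimately show ?thesis by (auto intro: cond_eliminableI[OF eq])
qed

lemma cond_eliminable_Disj_Box:
  assumes "cond_eliminable \<phi> a" and "cond_eliminable \<phi> b"
  shows "cond_eliminable \<phi> (Disj a (Box b))"
proof -
  obtain \<theta>a \<theta>b where "cond_free \<theta>a" "Iff (Cond \<phi> a) \<theta>a \<in> yalcin"
    and "cond_free \<theta>b" "Iff (Cond \<phi> b) \<theta>b \<in> yalcin"
    using assms unfolding cond_eliminable_def by blast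
  moreover have eq: "Iff (Cond \<phi> (Disj a (Box b))) (Disj \<theta>b \<theta>a) \<in> yalcin"
    using yalcin_Cond_Disj_Box calculation(2,4) by (rule yalcin_prop3) auto
  ultimately show ?thesis by (auto intro: cond_eliminableI[OF eq])
qed

lemma cond_eliminable_Disj_Neg_Box:
  assumes "cond_eliminable \<phi> a" and "cond_eliminable \<phi> b"
  shows "cond_eliminable \<phi> (Disj a (Neg (Box b)))"
proof -
  obtain \<theta>a \<theta>b where "cond_free \<theta>a" "Iff (Cond \<phi> a) \<theta>a \<in> yalcin"
    and "cond_free \<theta>b" "Iff (Cond \<phi> b) \<theta>b \<in> yalcin"
    using assms unfolding cond_eliminable_def by blast
  moreover have eq: "Iff (Cond \<phi> (Disj a (Neg (Box b)))) (Disj (Neg \<theta>b) \<theta>a) \<in> yalcin"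
    using yalcin_Cond_Disj_Neg_Box calculation(2,4) by (rule yalcin_prop3) auto
  ultimately show ?thesis by (auto intro: cond_eliminableI[OF eq])
qed

fun disjs :: "'p fm list \<Rightarrow> 'p fm" where
  "disjs [] = Bot"
| "disjs (x # xs) = Disj x (disjs xs)"

lemma prop_val_disjs [simp]: "prop_val g (disjs xs) = (\<exists>x\<in>set xs. prop_val g x)"
  by (induction xs) auto

text \<open>Conjunctions count twice, so that the De Morgan step from \<open>Neg (Conj a b)\<close>
  to the disjuncts \<open>Neg a\<close>, \<open>Neg b\<close> decreases the total weight.\<close>

fun weight :: "'p fm \<Rightarrow> nat" where
  "weight (Var p) = 1"
| "weight (Neg a) = weight a + 1"
| "weight (Conj a b) = weight a + weight b + 2"
| "weight (Box a) = weight a + 1"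
| "weight (Cond a b) = weight a + weight b + 1"

lemma weight_pos: "weight x > 0"
  by (cases x) auto

lemma cond_eliminable_disjs:
  assumes "cond_free \<phi>"
  shows "\<forall>x\<in>set L. cond_free x \<Longrightarrow> nonmodal \<pi> \<Longrightarrow> cond_eliminable \<phi> (Disj \<pi> (disjs L))"
proof (induction "sum_list (map weight L)" arbitrary: L \<pi> rule: less_induct)
  case less
  show ?case
  proof (cases L)
    case Nil
    with assms less.prems show ?thesis by (simp add: cond_eliminable_nonmodal)
  next
    case (Cons x L')
    have IH: "cond_eliminable \<phi> (Disj \<rho> (disjs M))"
      if "sum_list (map weight M) < sum_list (map weight L)" "\<forall>y\<in>set M. cond_free y" "nonmodal \<rho>"
      for M \<rho>
      using less.hyps that by blast
    have x: "cond_free x" and L': "\<forall>y\<in>set L'. cond_free y"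
      using less.prems(1) Cons by auto
    have rest: "cond_eliminable \<phi> (Disj \<pi> (disjs L'))"
      using IH[OF _ L' less.prems(2)] Cons weight_pos[of x] by simp
    have single: "cond_eliminable \<phi> b" if "weight b < sum_list (map weight L)" "cond_free b" for b
    proof (rule cond_eliminable_cong)
      show "Iff b (Disj Bot (disjs [b])) \<in> yalcin" by (rule yalcin_tautI) auto
      show "cond_eliminable \<phi> (Disj Bot (disjs [b]))" using IH[of "[b]" Bot] that by simp
    qed
    have via: "cond_eliminable \<phi> (Disj \<pi> (disjs L))"
      if "cond_eliminable \<phi> \<psi>" "\<And>g. prop_val g (Disj \<pi> (disjs L)) = prop_val g \<psi>" for \<psi>
    proof (rule cond_eliminable_cong[OF _ that(1)])
      show "Iff (Disj \<pi> (disjs L)) \<psi> \<in> yalcin"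
        by (rule yalcin_tautI) (simp only: prop_val_defined_connectives(3) that(2))
    qed
    show ?thesis
    proof (cases "nonmodal x")
      case True
      have "cond_eliminable \<phi> (Disj (Disj \<pi> x) (disjs L'))"
        using True less.prems(2) L' Cons weight_pos[of x] by (intro IH) auto
      then show ?thesis by (rule via) (use Cons in auto)
    next
      case False
      show ?thesis
      proof (cases x)
        case (Conj a b)
        have "cond_eliminable \<phi> (Conj (Disj \<pi> (disjs (a # L'))) (Disj \<pi> (disjs (b # L'))))"
          using Cons Conj x L' less.prems(2) by (intro cond_eliminable_Conj IH) auto
        then show ?thesis by (rule via) (use Cons Conj in auto)
      next
        case (Box b)
        have "cond_eliminable \<phi> (Disj (Disj \<pi> (disjs L')) (Box b))"
          by (rule cond_eliminable_Disj_Box[OF rest single]) (use Cons Box x in auto)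
        then show ?thesis by (rule via) (use Cons Box in auto)
      next
        case (Neg y)
        show ?thesis
        proof (cases y)
          case (Neg a)
          have "cond_eliminable \<phi> (Disj \<pi> (disjs (a # L')))"
            using Cons \<open>x = Neg y\<close> Neg x L' less.prems(2) by (intro IH) auto
          then show ?thesis by (rule via) (use Cons \<open>x = Neg y\<close> Neg in auto)
        next
          case (Conj a b)
          have "cond_eliminable \<phi> (Disj \<pi> (disjs (Neg a # Neg b # L')))"
            using Cons \<open>x = Neg y\<close> Conj x L' less.prems(2) by (intro IH) auto
          then show ?thesis by (rule via) (use Cons \<open>x = Neg y\<close> Conj in auto)
        next
          case (Box b)
          have "cond_eliminable \<phi> (Disj (Disj \<pi> (disjs L')) (Neg (Box b)))"
            by (rule cond_eliminable_Disj_Neg_Box[OF rest single])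
              (use Cons \<open>x = Neg y\<close> Box x in auto)
          then show ?thesis by (rule via) (use Cons \<open>x = Neg y\<close> Box in auto)
        qed (use False x \<open>x = Neg y\<close> in auto)
      qed (use False x in auto)
    qed
  qed
qed

lemma cond_eliminable:
  assumes "cond_free \<phi>" and "cond_free \<psi>"
  shows "cond_eliminable \<phi> \<psi>"
proof (rule cond_eliminable_cong)
  show "Iff \<psi> (Disj Bot (disjs [\<psi>])) \<in> yalcin" by (rule yalcin_tautI) auto
  show "cond_eliminable \<phi> (Disj Bot (disjs [\<psi>]))"
    using assms by (intro cond_eliminable_disjs) auto
qed

lemma cond_elimination: "\<exists>\<psi>'. cond_free \<psi>' \<and> Iff \<psi> \<psi>' \<in> yalcin"
proof (induction \<psi>)
  case (Var p)
  have "Iff (Var p) (Var p) \<in> yalcin" by (rule yalcin_tautI) auto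
  then show ?case by force
next
  case (Neg a)
  then obtain a' where "cond_free a'" "Iff a a' \<in> yalcin" by blast
  then show ?case by (intro exI[of _ "Neg a'"]) (simp add: yalcin_Iff_cong)
next
  case (Conj a b)
  then obtain a' b' where "cond_free a'" "Iff a a' \<in> yalcin" "cond_free b'" "Iff b b' \<in> yalcin"
    by blast
  then have "Iff (Conj a b) (Conj a' b') \<in> yalcin"
    by (blast intro: yalcin_Iff_trans[OF yalcin_Iff_cong(2) yalcin_Iff_cong(3)])
  with \<open>cond_free a'\<close> \<open>cond_free b'\<close> show ?case by (intro exI[of _ "Conj a' b'"]) simp
next
  case (Box a)
  then obtain a' where "cond_free a'" "Iff a a' \<in> yalcin" by blast
  then show ?case by (intro exI[of _ "Box a'"]) (simp add: yalcin_Iff_cong)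
next
  case (Cond a b)
  then obtain a' b' where "cond_free a'" "Iff a a' \<in> yalcin" "cond_free b'" "Iff b b' \<in> yalcin"
    by blast
  moreover obtain \<theta> where "cond_free \<theta>" "Iff (Cond a' b') \<theta> \<in> yalcin"
    using cond_eliminable[OF calculation(1,3)] unfolding cond_eliminable_def by blast
  ultimately have "Iff (Cond a b) \<theta> \<in> yalcin"
    by (blast intro: yalcin_Iff_trans[OF yalcin_Iff_trans[OF yalcin_Iff_cong(5) yalcin_Iff_cong(6)]])
  with \<open>cond_free \<theta>\<close> show ?case by blast
qed

subsection \<open>A finite canonical model for the conditional-free fragment\<close>

fun conjs :: "'p fm list \<Rightarrow> 'p fm" where
  "conjs [] = Top"
| "conjs (x # xs) = Conj x (conjs xs)"

lemma prop_val_conjs [simp]: "prop_val g (conjs xs) = (\<forall>x\<in>set xs. prop_val g x)"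
  by (induction xs) auto

lemma yalcin_Imp_conjsI: "(\<And>x. x \<in> set xs \<Longrightarrow> Imp A x \<in> yalcin) \<Longrightarrow> Imp A (conjs xs) \<in> yalcin"
proof (induction xs)
  case Nil
  then show ?case by (intro yalcin_tautI) simp
next
  case (Cons x xs)
  then have "Imp A x \<in> yalcin" "Imp A (conjs xs) \<in> yalcin" by auto
  then show ?case by (rule yalcin_prop2) auto
qed

lemma yalcin_Box_conjs:
  "Imp (conjs xs) y \<in> yalcin \<Longrightarrow> Imp (conjs (map Box xs)) (Box y) \<in> yalcin"
proof (induction xs arbitrary: y)
  case Nil
  then have "y \<in> yalcin" by (rule yalcin_prop1) simp
  then have "Box y \<in> yalcin" by (rule yalcin.Nec)
  then show ?case by (rule yalcin_prop1) simp
next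
  case (Cons x xs)
  have "Imp (conjs xs) (Imp x y) \<in> yalcin" using Cons.prems by (rule yalcin_prop1) auto
  then have "Imp (conjs (map Box xs)) (Box (Imp x y)) \<in> yalcin" by (rule Cons.IH)
  with yalcin.K show ?case by (rule yalcin_prop2) auto
qed

fun subformulas :: "'p fm \<Rightarrow> 'p fm list" where
  "subformulas (Var p) = [Var p]"
| "subformulas (Neg a) = Neg a # subformulas a"
| "subformulas (Conj a b) = Conj a b # subformulas a @ subformulas b"
| "subformulas (Box a) = Box a # subformulas a"
| "subformulas (Cond a b) = Cond a b # subformulas a @ subformulas b"

lemma mem_subformulas_self: "x \<in> set (subformulas x)"
  by (cases x) auto

lemma subformulas_trans: "x \<in> set (subformulas \<phi>) \<Longrightarrow> set (subformulas x) \<subseteq> set (subformulas \<phi>)"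
  by (induction \<phi>) auto

definition subformula_closed :: "'p fm list \<Rightarrow> bool" where
  "subformula_closed cs \<longleftrightarrow> (\<forall>c\<in>set cs. set (subformulas c) \<subseteq> set cs)"

lemma subformula_closedD:
  "subformula_closed cs \<Longrightarrow> c \<in> set cs \<Longrightarrow> x \<in> set (subformulas c) \<Longrightarrow> x \<in> set cs"
  unfolding subformula_closed_def by blast

definition char_conj :: "'p fm list \<Rightarrow> 'p fm set \<Rightarrow> 'p fm" where
  "char_conj cs D = conjs (map (\<lambda>c. if c \<in> D then c else Neg c) cs)"

lemma prop_val_char_conj: "prop_val g (char_conj cs D) = (\<forall>c\<in>set cs. prop_val g c = (c \<in> D))"
  unfolding char_conj_def by (induction cs) auto

lemma yalcin_char_conj_ImpI:
  assumes "c \<in> set cs"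
  shows "c \<in> D \<Longrightarrow> Imp (char_conj cs D) c \<in> yalcin"
    and "c \<notin> D \<Longrightarrow> Imp (char_conj cs D) (Neg c) \<in> yalcin"
  using assms by (auto intro!: yalcin_tautI simp: prop_val_char_conj)

definition consistent :: "'p fm \<Rightarrow> bool" where
  "consistent \<chi> \<longleftrightarrow> Neg \<chi> \<notin> yalcin"

definition is_atom :: "'p fm list \<Rightarrow> 'p fm set \<Rightarrow> bool" where
  "is_atom cs D \<longleftrightarrow> D \<subseteq> set cs \<and> consistent (char_conj cs D)"

lemma consistent_prop_satisfiable: "consistent \<chi> \<Longrightarrow> \<exists>g. prop_val g \<chi>"
  unfolding consistent_def using yalcin_tautI[of "Neg \<chi>"] by auto

lemma consistent_prop_mono: "consistent a \<Longrightarrow> (\<And>g. prop_val g a \<Longrightarrow> prop_val g b) \<Longrightarrow> consistent b"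
  unfolding consistent_def using yalcin_prop1[of "Neg b" "Neg a"] by auto

lemma consistent_split: "consistent \<chi> \<Longrightarrow> consistent (Conj \<chi> c) \<or> consistent (Conj \<chi> (Neg c))"
  unfolding consistent_def using yalcin_prop2[of "Neg (Conj \<chi> c)" "Neg (Conj \<chi> (Neg c))" "Neg \<chi>"]
  by auto

lemma consistent_extend_to_atom:
  "distinct cs \<Longrightarrow> consistent \<chi> \<Longrightarrow> \<exists>D\<subseteq>set cs. consistent (Conj \<chi> (char_conj cs D))"
proof (induction cs arbitrary: \<chi>)
  case Nil
  have "consistent (Conj \<chi> (char_conj [] {}))"
    by (rule consistent_prop_mono[OF Nil.prems(2)]) (simp add: char_conj_def)
  then show ?case by blast
next
  case (Cons c cs)
  have c: "c \<notin> set cs" "distinct cs" using Cons.prems(1) by auto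
  from consistent_split[OF Cons.prems(2)] show ?case
  proof
    assume "consistent (Conj \<chi> c)"
    then obtain D where D: "D \<subseteq> set cs" "consistent (Conj (Conj \<chi> c) (char_conj cs D))"
      using Cons.IH c by blast
    have "consistent (Conj \<chi> (char_conj (c # cs) (insert c D)))"
      by (rule consistent_prop_mono[OF D(2)]) (use c(1) in \<open>auto simp: prop_val_char_conj\<close>)
    moreover have "insert c D \<subseteq> set (c # cs)" using D(1) by auto
    ultimately show ?thesis by blast
  next
    assume "consistent (Conj \<chi> (Neg c))"
    then obtain D where D: "D \<subseteq> set cs" "consistent (Conj (Conj \<chi> (Neg c)) (char_conj cs D))"
      using Cons.IH c by blast
    have "consistent (Conj \<chi> (char_conj (c # cs) D))"
      by (rule consistent_prop_mono[OF D(2)]) (use D(1) c(1) in \<open>auto simp: prop_val_char_conj\<close>)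
    moreover have "D \<subseteq> set (c # cs)" using D(1) by auto
    ultimately show ?thesis by blast
  qed
qed

lemma is_atomI:
  assumes "D \<subseteq> set cs" and "consistent (Conj \<chi> (char_conj cs D))"
  shows "is_atom cs D"
  unfolding is_atom_def using assms(1) consistent_prop_mono[OF assms(2)] by simp

lemma is_atom_valuation: "is_atom cs D \<Longrightarrow> \<exists>g. \<forall>c\<in>set cs. prop_val g c = (c \<in> D)"
  unfolding is_atom_def using consistent_prop_satisfiable prop_val_char_conj by metis

fun boxed :: "'p fm list \<Rightarrow> 'p fm list" where
  "boxed [] = []"
| "boxed (Box c # cs) = c # boxed cs"
| "boxed (_ # cs) = boxed cs"

lemma set_boxed [simp]: "set (boxed cs) = {c. Box c \<in> set cs}"
  by (induction cs rule: boxed.induct) auto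

definition cluster :: "'p fm list \<Rightarrow> 'p fm set \<Rightarrow> 'p fm set set" where
  "cluster cs G = {D. is_atom cs D \<and> (\<forall>c. Box c \<in> set cs \<longrightarrow> (Box c \<in> D \<longleftrightarrow> Box c \<in> G))
                      \<and> (\<forall>c. Box c \<in> G \<longrightarrow> c \<in> D)}"

text \<open>The witness atom must contain \<open>\<not>b\<close>, every \<open>c\<close> with \<open>\<box>c \<in> G\<close>, and the
  boxed literals of \<open>G\<close>; if these were jointly inconsistent, K together with 4 and 5
  (which box the boxed literals) would derive \<open>\<box>b\<close> from the atom \<open>G\<close>.\<close>

lemma cluster_refutes_Box:
  assumes cs: "distinct cs" "subformula_closed cs" and G: "is_atom cs G"
    and b: "Box b \<in> set cs" "Box b \<notin> G"
  shows "\<exists>D\<in>cluster cs G. b \<notin> D"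
proof -
  define necs where "necs = filter (\<lambda>c. Box c \<in> G) (boxed cs)"
  define box_lits where "box_lits = map (\<lambda>c. if Box c \<in> G then Box c else Neg (Box c)) (boxed cs)"
  define \<chi> where "\<chi> = Conj (conjs (necs @ box_lits)) (Neg b)"
  have "consistent \<chi>"
  proof (rule ccontr)
    assume "\<not> consistent \<chi>"
    then have "Neg \<chi> \<in> yalcin" by (simp add: consistent_def)
    then have "Imp (conjs (necs @ box_lits)) b \<in> yalcin"
      unfolding \<chi>_def by (rule yalcin_prop1) auto
    then have 1: "Imp (conjs (map Box (necs @ box_lits))) (Box b) \<in> yalcin"
      by (rule yalcin_Box_conjs)
    have 2: "Imp (char_conj cs G) (conjs (map Box (necs @ box_lits))) \<in> yalcin"
    proof (rule yalcin_Imp_conjsI)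
      fix x assume "x \<in> set (map Box (necs @ box_lits))"
      then consider c where "Box c \<in> set cs" "Box c \<in> G" "x = Box c"
        | c where "Box c \<in> set cs" "Box c \<in> G" "x = Box (Box c)"
        | c where "Box c \<in> set cs" "Box c \<notin> G" "x = Box (Neg (Box c))"
        unfolding necs_def box_lits_def by (auto split: if_splits)
      then show "Imp (char_conj cs G) x \<in> yalcin"
      proof cases
        case 1
        then show ?thesis by (simp add: yalcin_char_conj_ImpI)
      next
        case 2
        then have "Imp (char_conj cs G) (Box c) \<in> yalcin"
          by (simp add: yalcin_char_conj_ImpI)
        then have "Imp (char_conj cs G) (Box (Box c)) \<in> yalcin"
          using yalcin_Box_4 by (rule yalcin_Imp_trans)
        with 2 show ?thesis by simp
      next
        case 3
        then have "Imp (char_conj cs G) (Neg (Box c)) \<in> yalcin"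
          by (simp add: yalcin_char_conj_ImpI)
        then have "Imp (char_conj cs G) (Box (Neg (Box c))) \<in> yalcin"
          using yalcin_Box_5 by (rule yalcin_Imp_trans)
        with 3 show ?thesis by simp
      qed
    qed
    have 3: "Imp (char_conj cs G) (Neg (Box b)) \<in> yalcin"
      using b by (simp add: yalcin_char_conj_ImpI)
    from 1 2 3 have "Neg (char_conj cs G) \<in> yalcin" by (rule yalcin_prop3) auto
    with G show False by (simp add: is_atom_def consistent_def)
  qed
  then obtain D where D: "D \<subseteq> set cs" "consistent (Conj \<chi> (char_conj cs D))"
    using consistent_extend_to_atom[OF cs(1)] by blast
  then obtain g where g: "prop_val g \<chi>" "\<forall>c\<in>set cs. prop_val g c = (c \<in> D)"
    using consistent_prop_satisfiable by (fastforce simp: prop_val_char_conj)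
  have sub: "c \<in> set cs" if "Box c \<in> set cs" for c
    using subformula_closedD[OF cs(2) that] mem_subformulas_self[of c] by simp
  have "is_atom cs D"
    using D by (rule is_atomI)
  moreover have "Box c \<in> D \<longleftrightarrow> Box c \<in> G" if "Box c \<in> set cs" for c
  proof -
    have "(if Box c \<in> G then Box c else Neg (Box c)) \<in> set box_lits"
      unfolding box_lits_def set_map using that by (intro imageI) simp
    then have lit: "prop_val g (if Box c \<in> G then Box c else Neg (Box c))"
      using g(1) unfolding \<chi>_def by simp
    have "prop_val g (Box c) = (Box c \<in> D)"
      using g(2) that by blast
    with lit show ?thesis by (cases "Box c \<in> G") simp_all
  qed
  moreover have "c \<in> D" if "Box c \<in> G" for c
  proof -
    have "Box c \<in> set cs" using that G unfolding is_atom_def by auto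
    with that have "c \<in> set necs" unfolding necs_def by simp
    then have "prop_val g c" using g(1) unfolding \<chi>_def by simp
    then show "c \<in> D" using g(2) sub[OF \<open>Box c \<in> set cs\<close>] by simp
  qed
  moreover have "b \<notin> D"
    using g sub[OF b(1)] unfolding \<chi>_def by auto
  ultimately show ?thesis unfolding cluster_def by blast
qed

text \<open>The worlds of the canonical model are sets of propositional variables, which
  is why completeness is obtained for models over the type \<open>'p set\<close>.\<close>

definition atom_world :: "'p fm set \<Rightarrow> 'p set" where
  "atom_world D = {p. Var p \<in> D}"

text \<open>\<open>G\<close> itself need not lie in its cluster, the logic having no axiom T.\<close>

lemma truth_lemma:
  assumes cs: "distinct cs" "subformula_closed cs" and G: "is_atom cs G"
  shows "set (subformulas \<psi>) \<subseteq> set cs \<Longrightarrow> cond_free \<psi> \<Longrightarrow> D \<in> cluster cs G \<union> {G} \<Longrightarrow>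
    sat (\<lambda>p. {w. p \<in> w}) (atom_world D) (atom_world ` cluster cs G) \<psi> \<longleftrightarrow> \<psi> \<in> D"
proof (induction \<psi> arbitrary: D)
  case (Var p)
  then show ?case by (simp add: atom_world_def)
next
  case (Neg a)
  obtain g where g: "\<forall>c\<in>set cs. prop_val g c = (c \<in> D)"
    using is_atom_valuation Neg.prems(3) G unfolding cluster_def by blast
  have "Neg a \<in> set cs" "a \<in> set cs"
    using Neg.prems(1) mem_subformulas_self[of a] by auto
  with g have "prop_val g (Neg a) = (Neg a \<in> D)" "prop_val g a = (a \<in> D)" by blast+
  then have "Neg a \<in> D \<longleftrightarrow> a \<notin> D" by simp
  then show ?case using Neg.IH[OF _ _ Neg.prems(3)] Neg.prems(1,2) by simp
next
  case (Conj a b)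
  obtain g where g: "\<forall>c\<in>set cs. prop_val g c = (c \<in> D)"
    using is_atom_valuation Conj.prems(3) G unfolding cluster_def by blast
  have "Conj a b \<in> set cs" "a \<in> set cs" "b \<in> set cs"
    using Conj.prems(1) mem_subformulas_self[of a] mem_subformulas_self[of b] by auto
  with g have "prop_val g (Conj a b) = (Conj a b \<in> D)" "prop_val g a = (a \<in> D)"
    "prop_val g b = (b \<in> D)" by blast+
  then have "Conj a b \<in> D \<longleftrightarrow> a \<in> D \<and> b \<in> D" by simp
  then show ?case using Conj.IH(1,2)[OF _ _ Conj.prems(3)] Conj.prems(1,2) by simp
next
  case (Box b)
  have "Box b \<in> set cs" using Box.prems(1) by simp
  have IH: "sat (\<lambda>p. {w. p \<in> w}) (atom_world D') (atom_world ` cluster cs G) b \<longleftrightarrow> b \<in> D'"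
    if "D' \<in> cluster cs G" for D'
    using Box.IH[of D'] Box.prems(1,2) that by simp
  have "sat (\<lambda>p. {w. p \<in> w}) (atom_world D) (atom_world ` cluster cs G) (Box b)
      \<longleftrightarrow> (\<forall>D'\<in>cluster cs G. b \<in> D')"
    using IH by simp
  also have "\<dots> \<longleftrightarrow> Box b \<in> G"
  proof
    assume "\<forall>D'\<in>cluster cs G. b \<in> D'"
    then show "Box b \<in> G" using cluster_refutes_Box[OF cs G \<open>Box b \<in> set cs\<close>] by blast
  qed (auto simp: cluster_def)
  also have "\<dots> \<longleftrightarrow> Box b \<in> D"
    using \<open>Box b \<in> set cs\<close> Box.prems(3) unfolding cluster_def by auto
  finally show ?case .
qed simp

lemma completeness_cond_free:
  fixes \<phi> :: "'p fm"
  assumes "cond_free \<phi>" and valid: "valid_in TYPE('p set) \<phi>"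
  shows "\<phi> \<in> yalcin"
proof (rule ccontr)
  assume "\<phi> \<notin> yalcin"
  then have "consistent (Neg \<phi>)"
    unfolding consistent_def using yalcin_prop1[of "Neg (Neg \<phi>)" \<phi>] by auto
  define cs where "cs = remdups (subformulas \<phi>)"
  have cs: "distinct cs" "subformula_closed cs"
    unfolding cs_def subformula_closed_def using subformulas_trans by auto
  obtain G where G: "G \<subseteq> set cs" "consistent (Conj (Neg \<phi>) (char_conj cs G))"
    using consistent_extend_to_atom[OF cs(1) \<open>consistent (Neg \<phi>)\<close>] by blast
  then have "is_atom cs G" by (rule is_atomI)
  have "\<phi> \<notin> G"
    using consistent_prop_satisfiable[OF G(2)] mem_subformulas_self[of \<phi>]
    by (auto simp: prop_val_char_conj cs_def)
  moreover have "set (subformulas \<phi>) \<subseteq> set cs" by (simp add: cs_def)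
  ultimately have "\<not> sat (\<lambda>p. {w. p \<in> w}) (atom_world G) (atom_world ` cluster cs G) \<phi>"
    using truth_lemma[OF cs \<open>is_atom cs G\<close>, of \<phi> G] assms(1) by simp
  moreover have "sat (\<lambda>p. {w. p \<in> w}) (atom_world G) (atom_world ` cluster cs G) \<phi>"
    using valid[unfolded valid_in_def, rule_format, of UNIV "\<lambda>p. {w. p \<in> w}"]
    by (simp add: is_model_def)
  ultimately show False by contradiction
qed

lemma completeness:
  fixes \<phi> :: "'p fm"
  assumes "valid_in TYPE('p set) \<phi>"
  shows "\<phi> \<in> yalcin"
proof -
  obtain \<psi> where \<psi>: "cond_free \<psi>" "Iff \<phi> \<psi> \<in> yalcin"
    using cond_elimination by blast
  from \<psi>(2) assms have "valid_in TYPE('p set) \<psi>" by (rule valid_in_yalcin_Iff)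
  with \<psi>(1) have "\<psi> \<in> yalcin" by (rule completeness_cond_free)
  with \<psi>(2) show ?thesis by (rule yalcin_prop2) auto
qed

theorem theorem1:
  fixes \<phi> :: "'p fm" and \<sigma>s :: "'p fm list"
  shows "(\<phi> \<in> yalcin \<longrightarrow> valid_in TYPE('w) \<phi>)
       \<and> (valid_in TYPE('p set) \<phi> \<longleftrightarrow> \<phi> \<in> yalcin)
       \<and> (Imp (box_conj \<sigma>s) (Box \<phi>) \<in> yalcin \<longrightarrow> info_cons_in TYPE('w) (set \<sigma>s) \<phi>)
       \<and> (info_cons_in TYPE('p set) (set \<sigma>s) \<phi> \<longleftrightarrow> Imp (box_conj \<sigma>s) (Box \<phi>) \<in> yalcin)"
  by (auto simp: info_cons_in_iff_valid_in intro: valid_in_if_yalcin completeness)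

end
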